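(* Let $\mathbf{H}\in\mathbb{R}^{n\times m}$ and $\mathbf{v}\in\mathbb{R}^n$ be arbitrary and let $\mathbf{y}=\mathbf{H}\mathbf{e}+\mathbf{v}$. If $\tau>4\|\mathbf{v}\|^2$, then every optimal point $\mathbf{X}^\star$ of the SDR problem $\min\mathrm{Tr}(\mathbf{L}\mathbf{X})$ s.t. $\mathrm{diag}(\mathbf{X})=\mathbf{e}$, $\mathbf{X}\succeq\mathbf{0}$ yields $\hat{\mathbf{s}}_{\mathrm{SDR}}=\mathbf{e}$, i.e. $\mathrm{sgn}([\mathbf{X}^\star]_{i,m+1})=1$ for all $i=1,\dots,m$.
   Context: $\mathbf{e}$ is the all-ones vector (of the appropriate dimension). $\mathbf{L}=\begin{bmatrix}\mathbf{H}^T\mathbf{H}&-\mathbf{H}^T\mathbf{y}\\-\mathbf{y}^T\mathbf{H}&\mathbf{y}^T\mathbf{y}\end{bmatrix}$. $\mathcal{X}=\{\mathbf{X}\in\mathbb{S}^{m+1}:\mathrm{diag}(\mathbf{X})=\mathbf{e},\ \mathbf{X}\succeq\mathbf{0}\}$, where $\mathbb{S}^{k}$ is the set of real symmetric $k\times k$ matrices. $\mathbf{M}=[\mathbf{I}_m\ \ -\mathbf{e}]\in\mathbb{R}^{m\times(m+1)}$, $\mathcal{H}=\{\mathbf{X}\in\mathbb{S}^{m+1}:\mathrm{Tr}(\mathbf{M}\mathbf{X}\mathbf{M}^T)=1\}$, $\mathbf{L}_0=\mathbf{M}^T\mathbf{H}^T\mathbf{H}\mathbf{M}$, and $\tau=\min_{\mathbf{X}\in\mathcal{X}\cap\mathcal{H}}\mathrm{Tr}(\mathbf{L}_0\mathbf{X})$.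 The SDR estimate from an optimal point $\mathbf{X}^\star$ is $[\hat{\mathbf{s}}_{\mathrm{SDR}}]_i=\mathrm{sgn}([\mathbf{X}^\star]_{i,m+1})$ with $\mathrm{sgn}(x)=1$ for $x>0$, $-1$ for $x\le0$. *)

theory Defs
  imports Complex_Main
begin

text \<open>Matrices are represented as functions nat => nat => real with explicit
  dimension bounds; indices are 0-based, so the (m+1)-th row/column of an
  (m+1) x (m+1) matrix has index m.\<close>

definition sgnp :: "real \<Rightarrow> real" where
  "sgnp x = (if x > 0 then 1 else -1)"

definition sqnorm :: "nat \<Rightarrow> (nat \<Rightarrow> real) \<Rightarrow> real" where
  "sqnorm n v = (\<Sum>i<n. (v i)\<^sup>2)"

definition yvec :: "nat \<Rightarrow> (nat \<Rightarrow> nat \<Rightarrow> real) \<Rightarrow> (nat \<Rightarrow> real) \<Rightarrow> nat \<Rightarrow> real" where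
  "yvec m H v = (\<lambda>k. (\<Sum>j<m. H k j) + v k)"

definition Lmat :: "nat \<Rightarrow> nat \<Rightarrow> (nat \<Rightarrow> nat \<Rightarrow> real) \<Rightarrow> (nat \<Rightarrow> real) \<Rightarrow> nat \<Rightarrow> nat \<Rightarrow> real" where
  "Lmat n m H y = (\<lambda>i j.
     if i < m \<and> j < m then (\<Sum>k<n. H k i * H k j)
     else if i < m \<and> j = m then - (\<Sum>k<n. H k i * y k)
     else if i = m \<and> j < m then - (\<Sum>k<n. y k * H k j)
     else if i = m \<and> j = m then (\<Sum>k<n. (y k)\<^sup>2)
     else 0)"

definition trprod :: "nat \<Rightarrow> (nat \<Rightarrow> nat \<Rightarrow> real) \<Rightarrow> (nat \<Rightarrow> nat \<Rightarrow> real) \<Rightarrow> real" where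
  "trprod m A X = (\<Sum>i\<le>m. \<Sum>j\<le>m. A i j * X j i)"

definition sdr_feasible :: "nat \<Rightarrow> (nat \<Rightarrow> nat \<Rightarrow> real) \<Rightarrow> bool" where
  "sdr_feasible m X \<longleftrightarrow>
     (\<forall>i\<le>m. \<forall>j\<le>m. X i j = X j i) \<and>
     (\<forall>i\<le>m. X i i = 1) \<and>
     (\<forall>x::nat \<Rightarrow> real. (\<Sum>i\<le>m. \<Sum>j\<le>m. x i * X i j * x j) \<ge> 0)"

definition Mmat :: "nat \<Rightarrow> nat \<Rightarrow> nat \<Rightarrow> real" where
  "Mmat m = (\<lambda>i j. if j < m then (if i = j then 1 else 0) else -1)"

definition trMXMt :: "nat \<Rightarrow> (nat \<Rightarrow> nat \<Rightarrow> real) \<Rightarrow> real" where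
  "trMXMt m X = (\<Sum>i<m. \<Sum>j\<le>m. \<Sum>k\<le>m. Mmat m i j * X j k * Mmat m i k)"

definition L0mat :: "nat \<Rightarrow> nat \<Rightarrow> (nat \<Rightarrow> nat \<Rightarrow> real) \<Rightarrow> nat \<Rightarrow> nat \<Rightarrow> real" where
  "L0mat n m H = (\<lambda>a b. \<Sum>i<m. \<Sum>i'<m. Mmat m i a * (\<Sum>k<n. H k i * H k i') * Mmat m i' b)"

text \<open>tau = min over \<X> \<inter> \<H> of Tr(L0 X) (the minimum is attained; we take the infimum)\<close>
definition tau :: "nat \<Rightarrow> nat \<Rightarrow> (nat \<Rightarrow> nat \<Rightarrow> real) \<Rightarrow> real" where
  "tau n m H = Inf {trprod m (L0mat n m H) X | X. sdr_feasible m X \<and> trMXMt m X = 1}"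

definition sdr_optimal :: "nat \<Rightarrow> (nat \<Rightarrow> nat \<Rightarrow> real) \<Rightarrow> (nat \<Rightarrow> nat \<Rightarrow> real) \<Rightarrow> bool" where
  "sdr_optimal m L X \<longleftrightarrow> sdr_feasible m X \<and>
     (\<forall>Y. sdr_feasible m Y \<longrightarrow> trprod m L X \<le> trprod m L Y)"

end

theory Submission
  imports Defs
begin

(* Write w = ||v||^2. The all-ones matrix e e^T is feasible with objective value w, so an optimal
   X has Tr(L X) <= w. Since L is the Gram matrix of the rows of H M - v e_(m+1)^T, the identity
   |a - d|^2 = (|a|^2 + |a - 2d|^2)/2 - |d|^2 for the seminorm given by X yields
   Tr(L X) >= Tr(L0 X)/2 - w. If [X]_(i,m+1) <= 0 for some i <= m, then T = Tr(M X M^T) >= 2,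
   and X/T + (1 - 1/T) e e^T is admissible for tau with objective value Tr(L0 X)/T. Hence
   Tr(L0 X) >= 2 tau > 8 w and Tr(L X) > 3 w, a contradiction. *)

definition quad_form :: "nat \<Rightarrow> (nat \<Rightarrow> nat \<Rightarrow> real) \<Rightarrow> (nat \<Rightarrow> real) \<Rightarrow> real" where
  "quad_form m X x = (\<Sum>i\<le>m. \<Sum>j\<le>m. x i * X i j * x j)"

lemma quad_form_combination:
  "quad_form m (\<lambda>i j. a * X i j + b * Y i j) x = a * quad_form m X x + b * quad_form m Y x"
  unfolding quad_form_def by (simp add: algebra_simps sum.distrib sum_distrib_left)

lemma quad_form_ones: "quad_form m (\<lambda>i j. 1) x = (\<Sum>i\<le>m. x i)\<^sup>2"
  unfolding quad_form_def by (simp add: power2_eq_square sum_product)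

lemma quad_form_diff:
  "quad_form m X (\<lambda>j. x j - y j)
    = (quad_form m X x + quad_form m X (\<lambda>j. x j - 2 * y j)) / 2 - quad_form m X y"
proof -
  have "(x i - y i) * X i j * (x j - y j)
      = x i * X i j * x j / 2 + (x i - 2 * y i) * X i j * (x j - 2 * y j) / 2 - y i * X i j * y j"
    for i j by (simp add: field_simps)
  then show ?thesis
    unfolding quad_form_def by (simp add: sum_subtractf sum.distrib flip: sum_divide_distrib)
qed

lemma bilinear_delta:
  fixes X :: "nat \<Rightarrow> nat \<Rightarrow> real"
  assumes "a \<le> m" "b \<le> m"
  shows "(\<Sum>i\<le>m. \<Sum>j\<le>m. (if i = a then c else 0) * X i j * (if j = b then d else 0)) = c * X a b * d"
proof -
  have "(if i = a then c else 0) * X i j * (if j = b then d else 0)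
      = (if j = b then if i = a then c * X a b * d else 0 else 0)" for i j
    by simp
  then show ?thesis using assms by (simp add: sum.delta)
qed

lemma quad_form_single:
  assumes "a \<le> m"
  shows "quad_form m X (\<lambda>j. if j = a then c else 0) = c\<^sup>2 * X a a"
  using bilinear_delta[OF assms assms, of c X c] by (simp add: quad_form_def power2_eq_square)

lemma quad_form_basis_diff:
  assumes "a \<le> m" "b \<le> m"
  shows "quad_form m X (\<lambda>j. (if j = a then 1 else 0) - (if j = b then 1 else 0))
    = X a a - X a b - X b a + X b b"
proof -
  have "quad_form m X (\<lambda>j. (if j = a then 1 else 0) - (if j = b then 1 else 0)) =
    (\<Sum>i\<le>m. \<Sum>j\<le>m. (if i = a then 1 else 0) * X i j * (if j = a then 1 else 0))
    - (\<Sum>i\<le>m. \<Sum>j\<le>m. (if i = a then 1 else 0) * X i j * (if j = b then 1 else 0))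
    - (\<Sum>i\<le>m. \<Sum>j\<le>m. (if i = b then 1 else 0) * X i j * (if j = a then 1 else 0))
    + (\<Sum>i\<le>m. \<Sum>j\<le>m. (if i = b then 1 else 0) * X i j * (if j = b then 1 else 0))"
    unfolding quad_form_def by (simp add: algebra_simps flip: sum_subtractf sum.distrib)
  then show ?thesis by (simp only: bilinear_delta assms mult_1 mult_1_right)
qed

lemma trprod_gram:
  assumes "\<forall>i\<le>m. \<forall>j\<le>m. X i j = X j i"
    and "\<forall>i\<le>m. \<forall>j\<le>m. A i j = (\<Sum>k<n. r k i * r k j)"
  shows "trprod m A X = (\<Sum>k<n. quad_form m X (r k))"
proof -
  have "trprod m A X = (\<Sum>i\<le>m. \<Sum>j\<le>m. \<Sum>k<n. r k i * X i j * r k j)"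
    unfolding trprod_def
    by (intro sum.cong refl) (simp add: assms sum_distrib_left sum_distrib_right mult_ac)
  also have "\<dots> = (\<Sum>k<n. quad_form m X (r k))"
    unfolding quad_form_def by (simp add: sum.swap[of _ "{..<n}"])
  finally show ?thesis .
qed

lemma sdr_feasible_iff:
  "sdr_feasible m X \<longleftrightarrow> (\<forall>i\<le>m. \<forall>j\<le>m. X i j = X j i) \<and> (\<forall>i\<le>m. X i i = 1) \<and>
     (\<forall>x. 0 \<le> quad_form m X x)"
  unfolding sdr_feasible_def quad_form_def ..

lemma sdr_feasible_ones: "sdr_feasible m (\<lambda>i j. 1)"
  by (simp add: sdr_feasible_iff quad_form_ones)

lemma sdr_feasible_convex:
  assumes "sdr_feasible m X" "sdr_feasible m Y" "0 \<le> t" "t \<le> 1"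
  shows "sdr_feasible m (\<lambda>i j. t * X i j + (1 - t) * Y i j)"
  using assms by (auto simp: sdr_feasible_iff quad_form_combination)

definition HM_row :: "nat \<Rightarrow> (nat \<Rightarrow> nat \<Rightarrow> real) \<Rightarrow> nat \<Rightarrow> nat \<Rightarrow> real" where
  "HM_row m H k j = (if j < m then H k j else - (\<Sum>i<m. H k i))"

lemma HM_row_eq: "j \<le> m \<Longrightarrow> HM_row m H k j = (\<Sum>i<m. H k i * Mmat m i j)"
  by (cases "j < m")
    (auto simp: HM_row_def Mmat_def sum_negf if_distrib[where f="\<lambda>z. _ * z"] cong: if_cong)

lemma sum_HM_row: "(\<Sum>j\<le>m. HM_row m H k j) = 0"
  by (simp add: HM_row_def flip: lessThan_Suc_atMost)

lemma L0mat_eq_gram: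
  assumes "a \<le> m" "b \<le> m"
  shows "L0mat n m H a b = (\<Sum>k<n. HM_row m H k a * HM_row m H k b)"
proof -
  have "(\<Sum>k<n. HM_row m H k a * HM_row m H k b)
      = (\<Sum>k<n. \<Sum>i<m. \<Sum>i'<m. Mmat m i a * (H k i * H k i') * Mmat m i' b)"
    using assms by (simp add: HM_row_eq sum_product mult_ac)
  also have "\<dots> = (\<Sum>i<m. \<Sum>i'<m. \<Sum>k<n. Mmat m i a * (H k i * H k i') * Mmat m i' b)"
    by (simp add: sum.swap[of _ "{..<n}"])
  also have "\<dots> = L0mat n m H a b"
    unfolding L0mat_def by (simp add: sum_distrib_left sum_distrib_right)
  finally show ?thesis ..
qed

(* Since y = H e + v, the rows of [H, -y] are the rows of H M - v e_(m+1)^T,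
   so L is their Gram matrix. *)
lemma Lmat_eq_gram:
  assumes "i \<le> m" "j \<le> m"
  shows "Lmat n m H (yvec m H v) i j = (\<Sum>k<n.
    (HM_row m H k i - (if i = m then v k else 0)) * (HM_row m H k j - (if j = m then v k else 0)))"
proof -
  consider "i < m" "j < m" | "i < m" "j = m" | "i = m" "j < m" | "i = m" "j = m"
    using assms by linarith
  then show ?thesis
  proof cases
    case 1
    then show ?thesis by (simp add: Lmat_def HM_row_def)
  next
    case 2
    then show ?thesis
      by (simp add: Lmat_def HM_row_def yvec_def flip: sum_negf)
        (intro sum.cong refl, simp add: sum_negf algebra_simps)
  next
    case 3
    then show ?thesis
      by (simp add: Lmat_def HM_row_def yvec_def flip: sum_negf)
        (intro sum.cong refl, simp add: sum_negf algebra_simps)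
  next
    case 4
    then show ?thesis by (simp add: Lmat_def HM_row_def yvec_def power2_eq_square algebra_simps)
  qed
qed

lemma trMXMt_eq:
  assumes "\<forall>i\<le>m. \<forall>j\<le>m. X i j = X j i"
  shows "trMXMt m X = (\<Sum>i<m. X i i - 2 * X i m + X m m)"
proof -
  have "trMXMt m X = (\<Sum>i<m. quad_form m X (\<lambda>j. (if j = i then 1 else 0) - (if j = m then 1 else 0)))"
    unfolding trMXMt_def quad_form_def by (intro sum.cong refl) (auto simp: Mmat_def mult_ac)
  also have "\<dots> = (\<Sum>i<m. X i i - 2 * X i m + X m m)"
    using assms by (intro sum.cong refl) (simp add: quad_form_basis_diff)
  finally show ?thesis .
qed

lemma trprod_L0mat:
  assumes "\<forall>i\<le>m. \<forall>j\<le>m. X i j = X j i"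
  shows "trprod m (L0mat n m H) X = (\<Sum>k<n. quad_form m X (HM_row m H k))"
  using assms by (intro trprod_gram) (simp_all add: L0mat_eq_gram)

lemma trprod_Lmat:
  assumes "\<forall>i\<le>m. \<forall>j\<le>m. X i j = X j i"
  shows "trprod m (Lmat n m H (yvec m H v)) X
    = (\<Sum>k<n. quad_form m X (\<lambda>j. HM_row m H k j - (if j = m then v k else 0)))"
  using assms by (intro trprod_gram) (simp_all add: Lmat_eq_gram)

lemma trprod_L0mat_nonneg: "sdr_feasible m X \<Longrightarrow> 0 \<le> trprod m (L0mat n m H) X"
  by (simp add: sdr_feasible_iff trprod_L0mat sum_nonneg)

lemma trprod_Lmat_ones: "trprod m (Lmat n m H (yvec m H v)) (\<lambda>i j. 1) = sqnorm n v"
proof -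
  have "(\<Sum>j\<le>m. HM_row m H k j - (if j = m then v k else 0)) = - v k" for k
    by (simp add: sum_subtractf sum_HM_row)
  then show ?thesis
    by (simp add: trprod_Lmat quad_form_ones sqnorm_def)
qed

lemma trprod_Lmat_lower_bound:
  assumes "sdr_feasible m X"
  shows "trprod m (L0mat n m H) X / 2 - sqnorm n v \<le> trprod m (Lmat n m H (yvec m H v)) X"
proof -
  have sym: "\<forall>i\<le>m. \<forall>j\<le>m. X i j = X j i" and diag: "\<forall>i\<le>m. X i i = 1"
    and psd: "\<And>x. 0 \<le> quad_form m X x"
    using assms by (auto simp: sdr_feasible_iff)
  have corner: "quad_form m X (\<lambda>j. if j = m then v k else 0) = (v k)\<^sup>2" for k
    using diag by (simp add: quad_form_single)
  have "trprod m (Lmat n m H (yvec m H v)) X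
      = (\<Sum>k<n. (quad_form m X (HM_row m H k)
          + quad_form m X (\<lambda>j. HM_row m H k j - 2 * (if j = m then v k else 0))) / 2 - (v k)\<^sup>2)"
    unfolding trprod_Lmat[OF sym] by (intro sum.cong refl) (subst quad_form_diff, simp only: corner)
  also have "\<dots> = (trprod m (L0mat n m H) X
      + (\<Sum>k<n. quad_form m X (\<lambda>j. HM_row m H k j - 2 * (if j = m then v k else 0)))) / 2
      - sqnorm n v" (is "_ = (_ + ?S) / 2 - _")
    unfolding trprod_L0mat[OF sym] sqnorm_def
    by (simp only: sum_subtractf sum.distrib flip: sum_divide_distrib)
  finally have "trprod m (Lmat n m H (yvec m H v)) X
      = (trprod m (L0mat n m H) X + ?S) / 2 - sqnorm n v" .
  moreover have "0 \<le> ?S"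
    using psd by (rule sum_nonneg)
  ultimately show ?thesis
    by (simp add: add_divide_distrib)
qed

lemma trMXMt_ge_2:
  assumes "sdr_feasible m X" "i < m" "X i m \<le> 0"
  shows "2 \<le> trMXMt m X"
proof -
  have sym: "\<forall>i\<le>m. \<forall>j\<le>m. X i j = X j i" and diag: "\<forall>i\<le>m. X i i = 1"
    and psd: "\<And>x. 0 \<le> quad_form m X x"
    using assms(1) by (auto simp: sdr_feasible_iff)
  have nonneg: "0 \<le> X j j - 2 * X j m + X m m" if "j < m" for j
    using psd[of "\<lambda>l. (if l = j then 1 else 0) - (if l = m then 1 else 0)"] sym that
    by (simp add: quad_form_basis_diff)
  have "X i i - 2 * X i m + X m m \<le> trMXMt m X"
    unfolding trMXMt_eq[OF sym] using assms(2) nonneg by (intro member_le_sum) auto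
  then show ?thesis
    using assms(2,3) diag by simp
qed

(* The all-ones matrix is annihilated by H M, so mixing it into X scales Tr(L0 X)
   and Tr(M X M^T) by the same factor. *)
lemma tau_mult_trMXMt_le:
  assumes "sdr_feasible m X" "1 \<le> trMXMt m X"
  shows "tau n m H * trMXMt m X \<le> trprod m (L0mat n m H) X"
proof -
  define T where "T = trMXMt m X"
  define Y where "Y = (\<lambda>i j. 1 / T * X i j + (1 - 1 / T) * 1)"
  have sym: "\<forall>i\<le>m. \<forall>j\<le>m. X i j = X j i"
    using assms(1) by (simp add: sdr_feasible_iff)
  then have symY: "\<forall>i\<le>m. \<forall>j\<le>m. Y i j = Y j i"
    by (simp add: Y_def)
  have "sdr_feasible m Y"
    unfolding Y_def using assms by (intro sdr_feasible_convex sdr_feasible_ones) (simp_all add: T_def)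
  moreover have "trMXMt m Y = 1"
  proof -
    have "trMXMt m Y = 1 / T * (\<Sum>i<m. X i i - 2 * X i m + X m m)"
      unfolding trMXMt_eq[OF symY] by (simp add: Y_def sum_distrib_left algebra_simps)
    also have "\<dots> = 1"
      using assms(2) by (simp add: T_def trMXMt_eq[OF sym, symmetric])
    finally show ?thesis .
  qed
  ultimately have "tau n m H \<le> trprod m (L0mat n m H) Y"
    unfolding tau_def
    by (intro cInf_lower) (auto intro: bdd_belowI[of _ 0] trprod_L0mat_nonneg)
  also have "\<dots> = (\<Sum>k<n. quad_form m Y (HM_row m H k))"
    by (rule trprod_L0mat[OF symY])
  also have "\<dots> = 1 / T * trprod m (L0mat n m H) X"
    unfolding trprod_L0mat[OF sym] Y_def quad_form_combination
    by (simp add: quad_form_ones sum_HM_row sum_distrib_left)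
  finally show ?thesis
    using assms(2) by (simp add: T_def field_simps)
qed

theorem lemma1:
  fixes n m :: nat and H :: "nat \<Rightarrow> nat \<Rightarrow> real" and v :: "nat \<Rightarrow> real"
    and X :: "nat \<Rightarrow> nat \<Rightarrow> real"
  assumes "tau n m H > 4 * sqnorm n v"
    and "sdr_optimal m (Lmat n m H (yvec m H v)) X"
  shows "\<forall>i<m. sgnp (X i m) = 1"
proof (rule ccontr)
  assume "\<not> (\<forall>i<m. sgnp (X i m) = 1)"
  then obtain i where i: "i < m" "X i m \<le> 0"
    by (auto simp: sgnp_def split: if_splits)
  have feas: "sdr_feasible m X"
    using assms(2) by (simp add: sdr_optimal_def)
  have T: "2 \<le> trMXMt m X"
    using trMXMt_ge_2[OF feas i] .
  have w: "0 \<le> sqnorm n v"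
    by (simp add: sqnorm_def sum_nonneg)
  have "tau n m H * 2 \<le> tau n m H * trMXMt m X"
    using assms(1) w T by (intro mult_left_mono) auto
  also have "\<dots> \<le> trprod m (L0mat n m H) X"
    using feas T by (intro tau_mult_trMXMt_le) auto
  finally have "sqnorm n v < trprod m (Lmat n m H (yvec m H v)) X"
    using assms(1) w trprod_Lmat_lower_bound[OF feas, of n H v] by linarith
  moreover have "trprod m (Lmat n m H (yvec m H v)) X \<le> sqnorm n v"
    using assms(2) sdr_feasible_ones trprod_Lmat_ones by (metis sdr_optimal_def)
  ultimately show False
    by linarith
qed

end
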